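(* Let $\mathcal{H}$ be a separable Hilbert space and $H$ a positive Hermitian operator on $\mathcal{H}$ with purely discrete spectrum, such that there is no infinite-dimensional subspace on which $H$ is bounded. For $E>0$ let $\mathcal{P}(E)$ be the set of density operators $\rho$ on $\mathcal{H}$ with $\mathrm{Tr}\,\rho H\le E$. Then $\mathcal{P}(E)$ is complete with respect to the Hilbert–Schmidt norm, i.e. every Cauchy sequence in $\mathcal{P}(E)$ converges in $\|\cdot\|_2$ to an element of $\mathcal{P}(E)$.
   Context: A density operator is a Hermitian, positive semidefinite, trace-class operator of trace 1. $\|A\|_2=\sqrt{\mathrm{Tr}\,A^\dagger A}$ is the Hilbert–Schmidt norm. For positive $\rho$, $\mathrm{Tr}\,\rho H=\sum_n\langle n|\rho|n\rangle E_n$ in an eigenbasis of $H$. *)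

theory Defs
  imports "HOL-Analysis.Analysis"
begin

text \<open>
  Model: the separable Hilbert space is l2 over a countable index type 'i
  (vectors are functions 'i => complex with square-summable modulus).
  The Hamiltonian H is given in (the unitary image of) its orthonormal
  eigenbasis, i.e. as the multiplication operator by its eigenvalues Ev.
  Operators are functions on vectors; only their values on l2 matter.
\<close>

definition l2 :: "('i::countable \<Rightarrow> complex) set" where
  "l2 = {x. (\<lambda>i. (cmod (x i))\<^sup>2) summable_on UNIV}"

definition cinner :: "('i::countable \<Rightarrow> complex) \<Rightarrow> ('i \<Rightarrow> complex) \<Rightarrow> complex" where
  "cinner x y = (\<Sum>\<^sub>\<infinity>i. cnj (x i) * y i)"

definition l2norm :: "('i::countable \<Rightarrow> complex) \<Rightarrow> real" where
  "l2norm x = sqrt (\<Sum>\<^sub>\<infinity>i. (cmod (x i))\<^sup>2)"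

definition ket :: "'i::countable \<Rightarrow> ('i \<Rightarrow> complex)" where
  "ket i = (\<lambda>j. if j = i then 1 else 0)"

definition bounded_op :: "(('i::countable \<Rightarrow> complex) \<Rightarrow> ('i \<Rightarrow> complex)) \<Rightarrow> bool" where
  "bounded_op A \<longleftrightarrow>
     (\<forall>x\<in>l2. A x \<in> l2) \<and>
     (\<forall>x\<in>l2. \<forall>y\<in>l2. A (\<lambda>j. x j + y j) = (\<lambda>j. A x j + A y j)) \<and>
     (\<forall>x\<in>l2. \<forall>c::complex. A (\<lambda>j. c * x j) = (\<lambda>j. c * A x j)) \<and>
     (\<exists>C. \<forall>x\<in>l2. l2norm (A x) \<le> C * l2norm x)"

definition hermitian_op :: "(('i::countable \<Rightarrow> complex) \<Rightarrow> ('i \<Rightarrow> complex)) \<Rightarrow> bool" where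
  "hermitian_op A \<longleftrightarrow> (\<forall>x\<in>l2. \<forall>y\<in>l2. cinner x (A y) = cinner (A x) y)"

definition psd_op :: "(('i::countable \<Rightarrow> complex) \<Rightarrow> ('i \<Rightarrow> complex)) \<Rightarrow> bool" where
  "psd_op A \<longleftrightarrow> (\<forall>x\<in>l2. Im (cinner x (A x)) = 0 \<and> Re (cinner x (A x)) \<ge> 0)"

text \<open>For a positive operator A, |A| = A, so A is trace class iff
  sum_i <i|A|i> is finite (this is basis independent for positive operators).\<close>
definition trace_class_pos :: "(('i::countable \<Rightarrow> complex) \<Rightarrow> ('i \<Rightarrow> complex)) \<Rightarrow> bool" where
  "trace_class_pos A \<longleftrightarrow> (\<lambda>i. Re (cinner (ket i) (A (ket i)))) summable_on UNIV"

definition trace_op :: "(('i::countable \<Rightarrow> complex) \<Rightarrow> ('i \<Rightarrow> complex)) \<Rightarrow> complex" where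
  "trace_op A = (\<Sum>\<^sub>\<infinity>i. cinner (ket i) (A (ket i)))"

definition density_op :: "(('i::countable \<Rightarrow> complex) \<Rightarrow> ('i \<Rightarrow> complex)) \<Rightarrow> bool" where
  "density_op A \<longleftrightarrow> bounded_op A \<and> hermitian_op A \<and> psd_op A \<and>
                     trace_class_pos A \<and> trace_op A = 1"

text \<open>Hilbert-Schmidt norm ||A||_2 = sqrt (Tr A^* A) = sqrt (sum_i ||A|i>||^2).\<close>
definition hs_norm :: "(('i::countable \<Rightarrow> complex) \<Rightarrow> ('i \<Rightarrow> complex)) \<Rightarrow> real" where
  "hs_norm A = sqrt (\<Sum>\<^sub>\<infinity>i. (l2norm (A (ket i)))\<^sup>2)"

definition hdom :: "('i::countable \<Rightarrow> real) \<Rightarrow> ('i \<Rightarrow> complex) set" where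
  "hdom Ev = {x \<in> l2. (\<lambda>i. (Ev i * cmod (x i))\<^sup>2) summable_on UNIV}"

definition hop :: "('i::countable \<Rightarrow> real) \<Rightarrow> ('i \<Rightarrow> complex) \<Rightarrow> ('i \<Rightarrow> complex)" where
  "hop Ev x = (\<lambda>i. complex_of_real (Ev i) * x i)"

definition csubspace_l2 :: "('i::countable \<Rightarrow> complex) set \<Rightarrow> bool" where
  "csubspace_l2 V \<longleftrightarrow> (\<lambda>j. 0) \<in> V \<and>
     (\<forall>x\<in>V. \<forall>y\<in>V. (\<lambda>j. x j + y j) \<in> V) \<and>
     (\<forall>x\<in>V. \<forall>c::complex. (\<lambda>j. c * x j) \<in> V)"

definition cindependent :: "('i::countable \<Rightarrow> complex) set \<Rightarrow> bool" where
  "cindependent S \<longleftrightarrow> (\<forall>F c. finite F \<and> F \<subseteq> S \<and>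
       (\<lambda>j. \<Sum>v\<in>F. c v * v j) = (\<lambda>j. 0) \<longrightarrow> (\<forall>v\<in>F. c v = (0::complex)))"

definition infinite_dim :: "('i::countable \<Rightarrow> complex) set \<Rightarrow> bool" where
  "infinite_dim V \<longleftrightarrow> (\<exists>S\<subseteq>V. infinite S \<and> cindependent S)"

definition no_bounded_inf_subspace :: "('i::countable \<Rightarrow> real) \<Rightarrow> bool" where
  "no_bounded_inf_subspace Ev \<longleftrightarrow>
     (\<forall>V. csubspace_l2 V \<and> V \<subseteq> hdom Ev \<and> infinite_dim V \<longrightarrow>
          \<not> (\<exists>C. \<forall>x\<in>V. l2norm (hop Ev x) \<le> C * l2norm x))"

text \<open>Tr(rho H) = sum_n <n|rho|n> E_n (infinite if the series diverges).\<close>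
definition energy_bounded :: "('i::countable \<Rightarrow> real) \<Rightarrow> real \<Rightarrow>
    (('i \<Rightarrow> complex) \<Rightarrow> ('i \<Rightarrow> complex)) \<Rightarrow> bool" where
  "energy_bounded Ev E A \<longleftrightarrow>
     (\<lambda>i. Re (cinner (ket i) (A (ket i))) * Ev i) summable_on UNIV \<and>
     (\<Sum>\<^sub>\<infinity>i. Re (cinner (ket i) (A (ket i))) * Ev i) \<le> E"

definition Pset :: "('i::countable \<Rightarrow> real) \<Rightarrow> real \<Rightarrow>
    (('i \<Rightarrow> complex) \<Rightarrow> ('i \<Rightarrow> complex)) set" where
  "Pset Ev E = {A. density_op A \<and> energy_bounded Ev E A}"

end

theory Submission
  imports Defs
begin

text \<open>
  Entries of a Hilbert--Schmidt Cauchy sequence \<open>\<rho>\<^sub>n\<close> converge; let \<open>\<sigma>\<close> be the operator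
  whose matrix is the entrywise limit. Positivity passes to the limit through the finite
  principal sections of the matrices, and Fatou's lemma for sums gives
  \<open>\<parallel>\<rho>\<^sub>n - \<sigma>\<parallel>\<^sub>2 \<rightarrow> 0\<close>, \<open>Tr \<sigma> \<le> 1\<close> and \<open>Tr \<sigma>H \<le> E\<close>.
  The energy bound is what prevents mass from escaping: since \<open>H\<close> is bounded on no
  infinite-dimensional subspace, every sublevel set \<open>{n. E\<^sub>n \<le> C}\<close> is finite, and by
  Markov's inequality it carries diagonal mass at least \<open>1 - E/C\<close> for every \<open>\<rho>\<^sub>n\<close>,
  hence also for \<open>\<sigma>\<close>. So \<open>Tr \<sigma> = 1\<close>.
\<close>

lemma cmod_add_squared_le: "(cmod (a + b))\<^sup>2 \<le> 2 * (cmod a)\<^sup>2 + 2 * (cmod b)\<^sup>2"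
proof -
  have "(cmod (a + b))\<^sup>2 \<le> (cmod a + cmod b)\<^sup>2"
    by (simp add: power_mono norm_triangle_ineq)
  also have "\<dots> \<le> 2 * (cmod a)\<^sup>2 + 2 * (cmod b)\<^sup>2"
    using zero_le_power2[of "cmod a - cmod b"] by (simp add: power2_eq_square algebra_simps)
  finally show ?thesis .
qed

lemma summable_on_if_finite_sums_le:
  fixes f :: "'a \<Rightarrow> real"
  assumes "\<And>x. x \<in> A \<Longrightarrow> 0 \<le> f x" and "\<And>G. finite G \<Longrightarrow> G \<subseteq> A \<Longrightarrow> sum f G \<le> K"
  shows "f summable_on A"
  by (rule nonneg_bdd_above_summable_on) (use assms in \<open>auto intro!: bdd_aboveI2\<close>)

lemma infsum_mult_le_sqrt:
  fixes f g :: "'a \<Rightarrow> real"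
  assumes f0: "\<And>x. x \<in> A \<Longrightarrow> 0 \<le> f x" and g0: "\<And>x. x \<in> A \<Longrightarrow> 0 \<le> g x"
    and f: "(\<lambda>x. (f x)\<^sup>2) summable_on A" and g: "(\<lambda>x. (g x)\<^sup>2) summable_on A"
  shows "(\<lambda>x. f x * g x) summable_on A"
    and "(\<Sum>\<^sub>\<infinity>x\<in>A. f x * g x) \<le> sqrt (\<Sum>\<^sub>\<infinity>x\<in>A. (f x)\<^sup>2) * sqrt (\<Sum>\<^sub>\<infinity>x\<in>A. (g x)\<^sup>2)"
proof -
  have finite_sums: "(\<Sum>x\<in>G. f x * g x) \<le> sqrt (\<Sum>\<^sub>\<infinity>x\<in>A. (f x)\<^sup>2) * sqrt (\<Sum>\<^sub>\<infinity>x\<in>A. (g x)\<^sup>2)"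
    if "finite G" "G \<subseteq> A" for G
  proof -
    have "(\<Sum>x\<in>G. f x * g x)\<^sup>2 \<le> (\<Sum>x\<in>G. (f x)\<^sup>2) * (\<Sum>x\<in>G. (g x)\<^sup>2)"
      by (rule Cauchy_Schwarz_ineq_sum)
    also have "\<dots> \<le> (\<Sum>\<^sub>\<infinity>x\<in>A. (f x)\<^sup>2) * (\<Sum>\<^sub>\<infinity>x\<in>A. (g x)\<^sup>2)"
      by (intro mult_mono finite_sum_le_infsum f g that sum_nonneg infsum_nonneg) auto
    finally have "(\<Sum>x\<in>G. f x * g x) \<le> sqrt ((\<Sum>\<^sub>\<infinity>x\<in>A. (f x)\<^sup>2) * (\<Sum>\<^sub>\<infinity>x\<in>A. (g x)\<^sup>2))"
      by (rule real_le_rsqrt)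
    then show ?thesis
      by (simp add: real_sqrt_mult)
  qed
  show summable: "(\<lambda>x. f x * g x) summable_on A"
    by (rule summable_on_if_finite_sums_le[OF _ finite_sums]) (use f0 g0 in auto)
  show "(\<Sum>\<^sub>\<infinity>x\<in>A. f x * g x) \<le> sqrt (\<Sum>\<^sub>\<infinity>x\<in>A. (f x)\<^sup>2) * sqrt (\<Sum>\<^sub>\<infinity>x\<in>A. (g x)\<^sup>2)"
    by (rule infsum_le_finite_sums[OF summable finite_sums])
qed

lemma cmod_infsum_mult_squared_le:
  fixes f g :: "'a \<Rightarrow> complex"
  assumes f: "(\<lambda>x. (cmod (f x))\<^sup>2) summable_on A" and g: "(\<lambda>x. (cmod (g x))\<^sup>2) summable_on A"
  shows "(\<lambda>x. f x * g x) summable_on A"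
    and "(cmod (\<Sum>\<^sub>\<infinity>x\<in>A. f x * g x))\<^sup>2 \<le> (\<Sum>\<^sub>\<infinity>x\<in>A. (cmod (f x))\<^sup>2) * (\<Sum>\<^sub>\<infinity>x\<in>A. (cmod (g x))\<^sup>2)"
proof -
  note cs = infsum_mult_le_sqrt[of A "\<lambda>x. cmod (f x)" "\<lambda>x. cmod (g x)", OF _ _ f g]
  show "(\<lambda>x. f x * g x) summable_on A"
    unfolding summable_on_iff_abs_summable_on_complex using cs(1) by (simp add: norm_mult)
  have "cmod (\<Sum>\<^sub>\<infinity>x\<in>A. f x * g x) \<le> (\<Sum>\<^sub>\<infinity>x\<in>A. cmod (f x) * cmod (g x))"
    using norm_infsum_bound[of "\<lambda>x. f x * g x" A] cs(1) by (simp add: norm_mult)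
  also have "\<dots> \<le> sqrt (\<Sum>\<^sub>\<infinity>x\<in>A. (cmod (f x))\<^sup>2) * sqrt (\<Sum>\<^sub>\<infinity>x\<in>A. (cmod (g x))\<^sup>2)"
    using cs(2) by simp
  finally have "(cmod (\<Sum>\<^sub>\<infinity>x\<in>A. f x * g x))\<^sup>2
      \<le> (sqrt (\<Sum>\<^sub>\<infinity>x\<in>A. (cmod (f x))\<^sup>2) * sqrt (\<Sum>\<^sub>\<infinity>x\<in>A. (cmod (g x))\<^sup>2))\<^sup>2"
    by (rule power_mono) simp
  then show "(cmod (\<Sum>\<^sub>\<infinity>x\<in>A. f x * g x))\<^sup>2 \<le> (\<Sum>\<^sub>\<infinity>x\<in>A. (cmod (f x))\<^sup>2) * (\<Sum>\<^sub>\<infinity>x\<in>A. (cmod (g x))\<^sup>2)"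
    by (simp add: power_mult_distrib infsum_nonneg)
qed

lemma summable_on_product_nonneg:
  fixes f :: "'a \<Rightarrow> real" and g :: "'b \<Rightarrow> real"
  assumes "f summable_on UNIV" "g summable_on UNIV" "\<And>x. 0 \<le> f x" "\<And>y. 0 \<le> g y"
  shows "(\<lambda>(x, y). f x * g y) summable_on UNIV"
proof (rule summable_on_if_finite_sums_le)
  fix G :: "('a \<times> 'b) set" assume G: "finite G"
  have "sum (\<lambda>(x, y). f x * g y) G \<le> sum (\<lambda>(x, y). f x * g y) (fst ` G \<times> snd ` G)"
    by (rule sum_mono2) (use G assms in \<open>auto simp: case_prod_beta intro: rev_image_eqI\<close>)
  also have "\<dots> = (\<Sum>x\<in>fst ` G. f x) * (\<Sum>y\<in>snd ` G. g y)"
    by (simp add: sum_product sum.cartesian_product)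
  also have "\<dots> \<le> infsum f UNIV * infsum g UNIV"
    by (rule mult_mono) (use G assms in \<open>auto intro!: finite_sum_le_infsum sum_nonneg infsum_nonneg\<close>)
  finally show "sum (\<lambda>(x, y). f x * g y) G \<le> infsum f UNIV * infsum g UNIV" .
qed (use assms in auto)

lemma infsum_le_of_tendsto:
  fixes f :: "'b \<Rightarrow> 'a \<Rightarrow> real"
  assumes F: "F \<noteq> bot"
    and lim: "\<And>x. x \<in> A \<Longrightarrow> ((\<lambda>n. f n x) \<longlongrightarrow> g x) F"
    and bound: "\<forall>\<^sub>F n in F. (\<forall>x\<in>A. 0 \<le> f n x) \<and> f n summable_on A \<and> infsum (f n) A \<le> K"
  shows "g summable_on A" and "infsum g A \<le> K"
proof -
  have finite_sums: "sum g G \<le> K" if G: "finite G" "G \<subseteq> A" for G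
  proof (rule tendsto_upperbound)
    show "((\<lambda>n. sum (f n) G) \<longlongrightarrow> sum g G) F"
      using lim G by (auto intro!: tendsto_sum)
    show "\<forall>\<^sub>F n in F. sum (f n) G \<le> K"
      using bound by eventually_elim (use G in \<open>auto intro: order_trans[OF finite_sum_le_infsum]\<close>)
  qed (use F in simp)
  have "0 \<le> g x" if "x \<in> A" for x
    by (rule tendsto_lowerbound[OF lim[OF that]]) (use bound that F in \<open>auto elim: eventually_mono\<close>)
  then show summable: "g summable_on A"
    using finite_sums by (rule summable_on_if_finite_sums_le)
  show "infsum g A \<le> K"
    using summable finite_sums by (rule infsum_le_finite_sums)
qed

lemma finite_subsets_squares_at_top:
  "filterlim (\<lambda>F. F \<times> F) (finite_subsets_at_top UNIV) (finite_subsets_at_top UNIV)"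
  unfolding filterlim_finite_subsets_at_top
proof (intro allI impI)
  fix X :: "('a \<times> 'a) set" assume X: "finite X \<and> X \<subseteq> UNIV"
  show "\<forall>\<^sub>F F in finite_subsets_at_top UNIV. finite (F \<times> F) \<and> X \<subseteq> F \<times> F \<and> F \<times> F \<subseteq> UNIV"
    unfolding eventually_finite_subsets_at_top
    by (rule exI[of _ "fst ` X \<union> snd ` X"]) (use X in \<open>auto intro: rev_image_eqI\<close>)
qed

lemma quadratic_nonneg_imp_discriminant_le:
  fixes a b c :: real
  assumes a: "0 \<le> a" and nonneg: "\<And>t. 0 \<le> a * t\<^sup>2 - 2 * b * t + c"
  shows "b\<^sup>2 \<le> a * c"
proof (cases "a = 0")
  case True
  have "b = 0"
  proof (rule ccontr)
    assume "b \<noteq> 0"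
    then have "2 * b * ((c + 1) / (2 * b)) = c + 1"
      by simp
    then show False
      using nonneg[of "(c + 1) / (2 * b)"] True by simp
  qed
  then show ?thesis
    using True by simp
next
  case False
  with a have "0 < a"
    by simp
  have "a * (b / a)\<^sup>2 = b\<^sup>2 / a"
    using False by (simp add: power2_eq_square)
  moreover have "2 * b * (b / a) = 2 * (b\<^sup>2 / a)"
    by (simp add: power2_eq_square)
  ultimately have "b\<^sup>2 / a \<le> c"
    using nonneg[of "b / a"] by linarith
  then show ?thesis
    using \<open>0 < a\<close> by (simp add: pos_divide_le_eq mult.commute[of a c])
qed

lemma l2_add: "x \<in> l2 \<Longrightarrow> y \<in> l2 \<Longrightarrow> (\<lambda>j. x j + y j) \<in> l2"
  unfolding l2_def mem_Collect_eq
  by (rule summable_on_comparison_test[where f="\<lambda>i. 2 * (cmod (x i))\<^sup>2 + 2 * (cmod (y i))\<^sup>2"])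
     (auto intro: summable_on_add summable_on_cmult_right cmod_add_squared_le)

lemma l2_scale: "x \<in> l2 \<Longrightarrow> (\<lambda>j. c * x j) \<in> l2"
  unfolding l2_def mem_Collect_eq norm_mult power_mult_distrib
  by (rule summable_on_cmult_right)

lemma l2_finite_support: "finite F \<Longrightarrow> (\<And>j. j \<notin> F \<Longrightarrow> x j = 0) \<Longrightarrow> x \<in> l2"
  unfolding l2_def mem_Collect_eq
  by (subst summable_on_cong_neutral[where T=F and g="\<lambda>i. (cmod (x i))\<^sup>2"]) auto

lemma ket_in_l2 [simp]: "ket i \<in> l2"
  by (rule l2_finite_support[of "{i}"]) (auto simp: ket_def)

lemma cinner_finite_support:
  "finite F \<Longrightarrow> (\<And>j. j \<notin> F \<Longrightarrow> x j = 0) \<Longrightarrow> cinner x y = (\<Sum>j\<in>F. cnj (x j) * y j)"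
  unfolding cinner_def
  by (subst infsum_cong_neutral[where T=F and g="\<lambda>j. cnj (x j) * y j"]) auto

lemma cinner_ket [simp]: "cinner (ket i) y = y i"
  by (subst cinner_finite_support[of "{i}"]) (auto simp: ket_def)

lemma l2norm_squared: "(l2norm x)\<^sup>2 = (\<Sum>\<^sub>\<infinity>i. (cmod (x i))\<^sup>2)"
  unfolding l2norm_def by (simp add: infsum_nonneg)

section \<open>Hilbert--Schmidt and positive kernels\<close>

definition hs_kernel :: "('a \<Rightarrow> 'b \<Rightarrow> complex) \<Rightarrow> bool" where
  "hs_kernel s \<longleftrightarrow> (\<lambda>(i, j). (cmod (s i j))\<^sup>2) summable_on UNIV"

definition psd_kernel :: "('a \<Rightarrow> 'a \<Rightarrow> complex) \<Rightarrow> bool" where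
  "psd_kernel s \<longleftrightarrow> (\<forall>F x. finite F \<longrightarrow> (\<Sum>(j, i)\<in>F \<times> F. cnj (x j) * s i j * x i) \<in> \<real>\<^sub>\<ge>\<^sub>0)"

text \<open>The kernel \<open>s i j\<close> is the matrix entry \<open>\<langle>j|A|i\<rangle>\<close> (column index first), so that
  \<open>mat_op s (ket i) = s i\<close>, matching the entries \<open>A (ket i) j\<close> of an operator \<open>A\<close>.\<close>

definition mat_op :: "('i::countable \<Rightarrow> 'i \<Rightarrow> complex) \<Rightarrow> ('i \<Rightarrow> complex) \<Rightarrow> ('i \<Rightarrow> complex)" where
  "mat_op s x = (\<lambda>j. \<Sum>\<^sub>\<infinity>i. s i j * x i)"

lemma mat_op_ket [simp]: "mat_op s (ket i) = s i"
proof
  fix j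
  show "mat_op s (ket i) j = s i j"
    unfolding mat_op_def
    by (subst infsum_cong_neutral[where T="{i}" and g="\<lambda>k. s k j * ket i k"]) (auto simp: ket_def)
qed

lemma hs_kernel_swap: "hs_kernel s \<Longrightarrow> (\<lambda>(j, i). (cmod (s i j))\<^sup>2) summable_on UNIV"
  unfolding hs_kernel_def using summable_on_swap[of "\<lambda>(i, j). (cmod (s i j))\<^sup>2" UNIV UNIV] by simp

lemma hs_kernel_column: "hs_kernel s \<Longrightarrow> (\<lambda>i. (cmod (s i j))\<^sup>2) summable_on UNIV"
  using summable_on_SigmaD1[of "\<lambda>j i. (cmod (s i j))\<^sup>2" UNIV "\<lambda>_. UNIV" j] hs_kernel_swap by auto

lemma hs_kernel_column_norms: "hs_kernel s \<Longrightarrow> (\<lambda>j. \<Sum>\<^sub>\<infinity>i. (cmod (s i j))\<^sup>2) summable_on UNIV"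
  using summable_on_Sigma_banach[of "\<lambda>j i. (cmod (s i j))\<^sup>2" UNIV "\<lambda>_. UNIV"] hs_kernel_swap by auto

lemma hs_kernel_diff: "hs_kernel s \<Longrightarrow> hs_kernel t \<Longrightarrow> hs_kernel (\<lambda>i j. s i j - t i j)"
  unfolding hs_kernel_def
  by (rule summable_on_comparison_test[where
        f="\<lambda>p. 2 * (case p of (i, j) \<Rightarrow> (cmod (s i j))\<^sup>2) + 2 * (case p of (i, j) \<Rightarrow> (cmod (t i j))\<^sup>2)"])
     (auto intro: summable_on_add summable_on_cmult_right cmod_add_squared_le[of _ "- _", simplified])

lemma mat_op_squared_le:
  assumes "hs_kernel s" and "x \<in> l2"
  shows "(cmod (mat_op s x j))\<^sup>2 \<le> (\<Sum>\<^sub>\<infinity>i. (cmod (s i j))\<^sup>2) * (\<Sum>\<^sub>\<infinity>i. (cmod (x i))\<^sup>2)"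
  unfolding mat_op_def
  using cmod_infsum_mult_squared_le(2)[OF hs_kernel_column] assms by (simp add: l2_def)

lemma mat_op_in_l2:
  assumes s: "hs_kernel s" and x: "x \<in> l2"
  shows "mat_op s x \<in> l2"
  unfolding l2_def mem_Collect_eq
  by (rule summable_on_comparison_test[OF summable_on_cmult_left[OF hs_kernel_column_norms[OF s]]])
     (use mat_op_squared_le[OF s x] in auto)

lemma l2norm_mat_op_le:
  assumes s: "hs_kernel s" and x: "x \<in> l2"
  shows "l2norm (mat_op s x) \<le> sqrt (\<Sum>\<^sub>\<infinity>j. \<Sum>\<^sub>\<infinity>i. (cmod (s i j))\<^sup>2) * l2norm x"
proof -
  have "(\<Sum>\<^sub>\<infinity>j. (cmod (mat_op s x j))\<^sup>2) \<le> (\<Sum>\<^sub>\<infinity>j. (\<Sum>\<^sub>\<infinity>i. (cmod (s i j))\<^sup>2) * (\<Sum>\<^sub>\<infinity>i. (cmod (x i))\<^sup>2))"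
    using mat_op_in_l2[OF s x] mat_op_squared_le[OF s x]
    by (intro infsum_mono summable_on_cmult_left hs_kernel_column_norms[OF s]) (auto simp: l2_def)
  also have "\<dots> = (\<Sum>\<^sub>\<infinity>j. \<Sum>\<^sub>\<infinity>i. (cmod (s i j))\<^sup>2) * (\<Sum>\<^sub>\<infinity>i. (cmod (x i))\<^sup>2)"
    by (rule infsum_cmult_left')
  finally show ?thesis
    unfolding l2norm_def by (metis real_sqrt_le_mono real_sqrt_mult)
qed

lemma mat_op_add:
  assumes s: "hs_kernel s" and "x \<in> l2" "y \<in> l2"
  shows "mat_op s (\<lambda>j. x j + y j) = (\<lambda>j. mat_op s x j + mat_op s y j)"
proof
  fix j
  have "(\<lambda>i. s i j * x i) summable_on UNIV" "(\<lambda>i. s i j * y i) summable_on UNIV"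
    using cmod_infsum_mult_squared_le(1)[OF hs_kernel_column[OF s]] assms by (auto simp: l2_def)
  then show "mat_op s (\<lambda>j. x j + y j) j = mat_op s x j + mat_op s y j"
    unfolding mat_op_def by (simp add: distrib_left infsum_add)
qed

lemma mat_op_scale: "mat_op s (\<lambda>j. c * x j) = (\<lambda>j. c * mat_op s x j)"
  unfolding mat_op_def by (simp add: mult.left_commute infsum_cmult_right')

lemma bounded_op_mat_op: "hs_kernel s \<Longrightarrow> bounded_op (mat_op s)"
  unfolding bounded_op_def using mat_op_in_l2 mat_op_add mat_op_scale l2norm_mat_op_le by blast

lemma cinner_mat_op: "cinner x (mat_op s y) = (\<Sum>\<^sub>\<infinity>j. \<Sum>\<^sub>\<infinity>i. cnj (x j) * s i j * y i)"
  unfolding cinner_def mat_op_def by (simp add: mult.assoc infsum_cmult_right')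

lemma mat_op_form_summable:
  assumes s: "hs_kernel s" and x: "x \<in> l2" and y: "y \<in> l2"
  shows "(\<lambda>(j, i). cnj (x j) * s i j * y i) summable_on UNIV"
proof -
  have "(\<lambda>(j, i). (cmod (x j))\<^sup>2 * (cmod (y i))\<^sup>2) summable_on UNIV"
    using summable_on_product_nonneg[of "\<lambda>j. (cmod (x j))\<^sup>2" "\<lambda>i. (cmod (y i))\<^sup>2"] x y
    by (simp add: l2_def)
  then have "(\<lambda>p. (case p of (j, i) \<Rightarrow> s i j) * (case p of (j, i) \<Rightarrow> cnj (x j) * y i)) summable_on UNIV"
    using hs_kernel_swap[OF s]
    by (intro cmod_infsum_mult_squared_le(1)) (auto simp: case_prod_unfold norm_mult power_mult_distrib)
  then show ?thesis
    by (simp add: case_prod_unfold mult_ac)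
qed

lemma hermitian_op_mat_op:
  assumes s: "hs_kernel s" and herm: "\<And>i j. s i j = cnj (s j i)"
  shows "hermitian_op (mat_op s)"
  unfolding hermitian_op_def
proof (intro ballI)
  fix x y :: "'a \<Rightarrow> complex" assume x: "x \<in> l2" and y: "y \<in> l2"
  have "cinner (mat_op s x) y = (\<Sum>\<^sub>\<infinity>j. (\<Sum>\<^sub>\<infinity>i. cnj (s i j * x i)) * y j)"
    unfolding cinner_def mat_op_def by (simp only: infsum_cnj)
  also have "\<dots> = (\<Sum>\<^sub>\<infinity>j. \<Sum>\<^sub>\<infinity>i. cnj (s i j * x i) * y j)"
    by (simp only: infsum_cmult_left')
  also have "\<dots> = (\<Sum>\<^sub>\<infinity>j. \<Sum>\<^sub>\<infinity>i. cnj (x i) * s j i * y j)"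
  proof -
    have "cnj (s i j * x i) * y j = cnj (x i) * s j i * y j" for i j
      using herm[of j i] by simp
    then show ?thesis by (simp only:)
  qed
  also have "\<dots> = (\<Sum>\<^sub>\<infinity>i. \<Sum>\<^sub>\<infinity>j. cnj (x i) * s j i * y j)"
    using summable_on_swap[of "\<lambda>(j, i). cnj (x j) * s i j * y i" UNIV UNIV] mat_op_form_summable[OF s x y]
    by (intro infsum_swap_banach) simp
  finally show "cinner x (mat_op s y) = cinner (mat_op s x) y"
    by (simp add: cinner_mat_op)
qed

lemma psd_op_mat_op:
  assumes s: "hs_kernel s" and psd: "psd_kernel s"
  shows "psd_op (mat_op s)"
  unfolding psd_op_def
proof (intro ballI)
  fix x :: "'a \<Rightarrow> complex" assume x: "x \<in> l2"
  let ?q = "\<lambda>(j, i). cnj (x j) * s i j * x i"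
  have summable: "?q summable_on UNIV"
    by (rule mat_op_form_summable[OF s x x])
  have "cinner x (mat_op s x) = infsum ?q (UNIV \<times> UNIV)"
    unfolding cinner_mat_op by (rule infsum_Sigma'_banach) (simp add: summable)
  then have "(?q has_sum cinner x (mat_op s x)) UNIV"
    using has_sum_infsum[OF summable] by simp
  then have "(sum ?q \<longlongrightarrow> cinner x (mat_op s x)) (finite_subsets_at_top UNIV)"
    unfolding has_sum_def .
  txt \<open>The quadratic form is the limit of its finite principal sections.\<close>
  then have lim: "((\<lambda>F. sum ?q (F \<times> F)) \<longlongrightarrow> cinner x (mat_op s x)) (finite_subsets_at_top UNIV)"
    by (rule filterlim_compose[OF _ finite_subsets_squares_at_top])
  have "\<forall>\<^sub>F F in finite_subsets_at_top UNIV. sum ?q (F \<times> F) \<in> \<real>\<^sub>\<ge>\<^sub>0"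
    by (rule eventually_finite_subsets_at_top_weakI) (use psd in \<open>simp add: psd_kernel_def\<close>)
  then have "cinner x (mat_op s x) \<in> \<real>\<^sub>\<ge>\<^sub>0"
    by (rule Lim_in_closed_set[OF closed_nonneg_Reals_complex _ _ lim]) simp
  then show "Im (cinner x (mat_op s x)) = 0 \<and> 0 \<le> Re (cinner x (mat_op s x))"
    by (simp add: complex_nonneg_Reals_iff)
qed

lemma psd_kernel_pair:
  assumes psd: "psd_kernel s" and "i \<noteq> j"
  shows "cnj a * s i i * a + cnj a * s j i * b + cnj b * s i j * a + cnj b * s j j * b \<in> \<real>\<^sub>\<ge>\<^sub>0"
proof -
  define x where "x k = (if k = i then a else b)" for k
  define q where "q l k = cnj (x l) * s k l * x k" for l k
  have "finite {i, j}"
    by simp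
  then have "(\<Sum>(l, k)\<in>{i, j} \<times> {i, j}. q l k) \<in> \<real>\<^sub>\<ge>\<^sub>0"
    using psd unfolding psd_kernel_def q_def by blast
  also have "(\<Sum>(l, k)\<in>{i, j} \<times> {i, j}. q l k) = (\<Sum>l\<in>{i, j}. \<Sum>k\<in>{i, j}. q l k)"
    by (rule sum.cartesian_product[symmetric])
  also have "\<dots> = q i i + q i j + q j i + q j j"
    using \<open>i \<noteq> j\<close> by (simp add: add.assoc)
  finally show ?thesis
    using \<open>i \<noteq> j\<close> by (simp add: q_def x_def)
qed

lemma psd_kernel_diag: "psd_kernel s \<Longrightarrow> s i i \<in> \<real>\<^sub>\<ge>\<^sub>0"
  unfolding psd_kernel_def by (drule spec[of _ "{i}"], drule spec[of _ "\<lambda>_. 1"]) simp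

lemma psd_kernel_diag_eq: "psd_kernel s \<Longrightarrow> s i i = of_real (Re (s i i))"
  using psd_kernel_diag[of s i] by (simp add: complex_nonneg_Reals_iff complex_eq_iff)

lemma psd_kernel_hermitian:
  assumes psd: "psd_kernel s"
  shows "s i j = cnj (s j i)"
proof (cases "i = j")
  case True
  then show ?thesis
    using psd_kernel_diag_eq[OF psd, of i] by (metis complex_cnj_complex_of_real)
next
  case False
  txt \<open>Polarization: test the \<open>2 \<times> 2\<close> section at \<open>(1, 1)\<close> and \<open>(1, \<i>)\<close>.\<close>
  have "Im (s i i) = 0" "Im (s j j) = 0"
    using psd_kernel_diag[OF psd] by (auto simp: complex_nonneg_Reals_iff)
  moreover have "Im (s i i + s j i + s i j + s j j) = 0"
    using psd_kernel_pair[OF psd False, of 1 1] by (simp add: complex_nonneg_Reals_iff)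
  moreover have "Im (s i i + s j i * \<i> - \<i> * s i j + s j j) = 0"
    using psd_kernel_pair[OF psd False, of 1 \<i>] by (simp add: complex_nonneg_Reals_iff)
  ultimately show ?thesis
    by (simp add: complex_eq_iff)
qed

lemma psd_kernel_entry_quadratic:
  assumes psd: "psd_kernel s" and "i \<noteq> j"
  shows "0 \<le> ((cmod (s i j))\<^sup>2 * Re (s i i)) * t\<^sup>2 - 2 * (cmod (s i j))\<^sup>2 * t + Re (s j j)"
proof -
  txt \<open>Evaluate the \<open>2 \<times> 2\<close> section at \<open>(a, b) = (-t \<cdot> cnj (s i j), 1)\<close>.\<close>
  define c where "c = s i j"
  let ?a = "- (of_real t * cnj c)"
  let ?form = "cnj ?a * s i i * ?a + cnj ?a * s j i * 1 + cnj 1 * s i j * ?a + cnj 1 * s j j * 1"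
  have "s j i = cnj c"
    unfolding c_def by (rule psd_kernel_hermitian[OF psd])
  then have "?form = of_real t * of_real t * (c * cnj c) * s i i - 2 * of_real t * (c * cnj c) + s j j"
    unfolding c_def[symmetric] by (simp add: algebra_simps)
  also have "\<dots> = of_real (((cmod c)\<^sup>2 * Re (s i i)) * t\<^sup>2 - 2 * (cmod c)\<^sup>2 * t + Re (s j j))"
    unfolding complex_norm_square[symmetric]
    by (subst (1 2) psd_kernel_diag_eq[OF psd]) (simp add: power2_eq_square)
  finally have "?form = of_real (((cmod c)\<^sup>2 * Re (s i i)) * t\<^sup>2 - 2 * (cmod c)\<^sup>2 * t + Re (s j j))" .
  moreover have "?form \<in> \<real>\<^sub>\<ge>\<^sub>0"
    by (rule psd_kernel_pair[OF psd \<open>i \<noteq> j\<close>])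
  ultimately show ?thesis
    unfolding c_def by (metis nonneg_Reals_of_real_iff)
qed

lemma psd_kernel_entry_bound:
  assumes psd: "psd_kernel s"
  shows "(cmod (s i j))\<^sup>2 \<le> Re (s i i) * Re (s j j)"
proof (cases "i = j")
  case True
  then show ?thesis
    using psd_kernel_diag_eq[OF psd, of i] by (metis norm_of_real power2_abs power2_eq_square order_refl)
next
  case False
  let ?c = "(cmod (s i j))\<^sup>2"
  have "0 \<le> Re (s i i)" "0 \<le> Re (s j j)"
    using psd_kernel_diag[OF psd] by (simp_all add: complex_nonneg_Reals_iff)
  then have "?c\<^sup>2 \<le> (?c * Re (s i i)) * Re (s j j)"
    using psd_kernel_entry_quadratic[OF psd False] by (intro quadratic_nonneg_imp_discriminant_le) auto
  then have sq: "?c * ?c \<le> ?c * (Re (s i i) * Re (s j j))"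
    by (simp only: power2_eq_square[of ?c] mult.assoc)
  show ?thesis
  proof (cases "s i j = 0")
    case True
    then show ?thesis
      using \<open>0 \<le> Re (s i i)\<close> \<open>0 \<le> Re (s j j)\<close> by simp
  next
    case False
    then have "0 < ?c"
      by simp
    with sq show ?thesis
      by (simp only: mult_le_cancel_left_pos)
  qed
qed

lemma psd_kernel_hs_bound:
  assumes psd: "psd_kernel s" and trace: "\<And>G. finite G \<Longrightarrow> (\<Sum>i\<in>G. Re (s i i)) \<le> T"
    and F: "finite F"
  shows "(\<Sum>(i, j)\<in>F. (cmod (s i j))\<^sup>2) \<le> T\<^sup>2"
proof -
  let ?d = "\<lambda>i. Re (s i i)"
  have d_nonneg: "0 \<le> ?d i" for i
    using psd_kernel_diag[OF psd, of i] by (simp add: complex_nonneg_Reals_iff)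
  have "(\<Sum>(i, j)\<in>F. (cmod (s i j))\<^sup>2) \<le> (\<Sum>(i, j)\<in>fst ` F \<times> snd ` F. (cmod (s i j))\<^sup>2)"
    by (rule sum_mono2) (use F in \<open>auto simp: case_prod_beta intro: rev_image_eqI\<close>)
  also have "\<dots> \<le> (\<Sum>(i, j)\<in>fst ` F \<times> snd ` F. ?d i * ?d j)"
    by (rule sum_mono) (use psd_kernel_entry_bound[OF psd] in auto)
  also have "\<dots> = (\<Sum>i\<in>fst ` F. ?d i) * (\<Sum>j\<in>snd ` F. ?d j)"
    by (simp add: sum_product sum.cartesian_product)
  also have "\<dots> \<le> T * T"
    by (rule mult_mono) (use trace trace[of "{}"] F d_nonneg in \<open>auto intro: sum_nonneg\<close>)
  finally show ?thesis
    by (simp add: power2_eq_square)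
qed

lemma hs_kernel_if_psd_kernel:
  assumes psd: "psd_kernel s" and trace: "((\<lambda>i. Re (s i i)) has_sum T) UNIV"
  shows "hs_kernel s"
proof -
  have "(\<Sum>i\<in>G. Re (s i i)) \<le> T" if "finite G" for G
    using that psd_kernel_diag[OF psd]
    by (intro finite_sum_le_has_sum[OF trace]) (auto simp: complex_nonneg_Reals_iff)
  then show ?thesis
    unfolding hs_kernel_def
    by (intro summable_on_if_finite_sums_le) (use psd_kernel_hs_bound[OF psd] in auto)
qed

lemma psd_kernel_diag_has_sum_iff:
  assumes "psd_kernel s"
  shows "((\<lambda>i. s i i) has_sum of_real T) A \<longleftrightarrow> ((\<lambda>i. Re (s i i)) has_sum T) A"
proof -
  have "(\<lambda>i. s i i) = (\<lambda>i. of_real (Re (s i i)))"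
    using psd_kernel_diag_eq[OF assms] by blast
  then show ?thesis
    by (simp add: has_sum_of_real_iff)
qed

lemma psd_kernel_tendsto:
  assumes lim: "\<And>i j. ((\<lambda>n. t n i j) \<longlongrightarrow> s i j) F" and "F \<noteq> bot"
    and psd: "\<forall>\<^sub>F n in F. psd_kernel (t n)"
  shows "psd_kernel s"
  unfolding psd_kernel_def
proof (intro allI impI)
  fix G :: "'a set" and x :: "'a \<Rightarrow> complex" assume "finite G"
  show "(\<Sum>(j, i)\<in>G \<times> G. cnj (x j) * s i j * x i) \<in> \<real>\<^sub>\<ge>\<^sub>0"
  proof (rule Lim_in_closed_set[OF closed_nonneg_Reals_complex])
    show "((\<lambda>n. \<Sum>(j, i)\<in>G \<times> G. cnj (x j) * t n i j * x i) \<longlongrightarrow> (\<Sum>(j, i)\<in>G \<times> G. cnj (x j) * s i j * x i)) F"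
      unfolding case_prod_unfold by (intro tendsto_sum tendsto_mult tendsto_const lim)
    show "\<forall>\<^sub>F n in F. (\<Sum>(j, i)\<in>G \<times> G. cnj (x j) * t n i j * x i) \<in> \<real>\<^sub>\<ge>\<^sub>0"
      using psd unfolding psd_kernel_def by eventually_elim (use \<open>finite G\<close> in blast)
  qed fact
qed

lemma density_op_mat_op:
  assumes psd: "psd_kernel s" and trace: "((\<lambda>i. Re (s i i)) has_sum 1) UNIV"
  shows "density_op (mat_op s)"
proof -
  have hs: "hs_kernel s"
    by (rule hs_kernel_if_psd_kernel[OF psd trace])
  have "((\<lambda>i. s i i) has_sum 1) UNIV"
    using psd_kernel_diag_has_sum_iff[OF psd, where T=1] trace by simp
  then have "trace_op (mat_op s) = 1"
    unfolding trace_op_def by (simp add: infsumI)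
  moreover have "trace_class_pos (mat_op s)"
    unfolding trace_class_pos_def using trace by (simp add: has_sum_imp_summable)
  ultimately show ?thesis
    unfolding density_op_def
    using bounded_op_mat_op[OF hs] hermitian_op_mat_op[OF hs psd_kernel_hermitian[OF psd]]
      psd_op_mat_op[OF hs psd] by blast
qed

lemma bounded_op_add: "bounded_op A \<Longrightarrow> x \<in> l2 \<Longrightarrow> y \<in> l2 \<Longrightarrow> A (\<lambda>j. x j + y j) = (\<lambda>j. A x j + A y j)"
  unfolding bounded_op_def by blast

lemma bounded_op_scale: "bounded_op A \<Longrightarrow> x \<in> l2 \<Longrightarrow> A (\<lambda>j. c * x j) = (\<lambda>j. c * A x j)"
  unfolding bounded_op_def by blast

lemma bounded_op_sum_kets:
  assumes A: "bounded_op A" and F: "finite F"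
  shows "A (\<lambda>k. \<Sum>i\<in>F. c i * ket i k) = (\<lambda>j. \<Sum>i\<in>F. c i * A (ket i) j)"
  using F
proof (induction F rule: finite_induct)
  case empty
  show ?case
    using bounded_op_scale[OF A ket_in_l2, of 0] by simp
next
  case (insert a F)
  have F_l2: "(\<lambda>k. \<Sum>i\<in>F. c i * ket i k) \<in> l2"
    by (rule l2_finite_support[OF insert(1)]) (auto simp: ket_def intro!: sum.neutral)
  have "A (\<lambda>k. \<Sum>i\<in>insert a F. c i * ket i k) = A (\<lambda>k. c a * ket a k + (\<Sum>i\<in>F. c i * ket i k))"
    using insert by simp
  also have "\<dots> = (\<lambda>j. A (\<lambda>k. c a * ket a k) j + A (\<lambda>k. \<Sum>i\<in>F. c i * ket i k) j)"
    by (rule bounded_op_add[OF A l2_scale[OF ket_in_l2] F_l2])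
  also have "\<dots> = (\<lambda>j. \<Sum>i\<in>insert a F. c i * A (ket i) j)"
    using bounded_op_scale[OF A ket_in_l2, of "c a" a] insert by simp
  finally show ?case .
qed

lemma psd_kernel_of_psd_op:
  assumes A: "bounded_op A" and psd: "psd_op A"
  shows "psd_kernel (\<lambda>i j. A (ket i) j)"
  unfolding psd_kernel_def
proof (intro allI impI)
  fix F :: "'a set" and x :: "'a \<Rightarrow> complex" assume F: "finite F"
  define y where "y k = (\<Sum>i\<in>F. x i * ket i k)" for k
  have y_eq: "y k = (if k \<in> F then x k else 0)" for k
    unfolding y_def ket_def using F by (simp add: if_distrib[of "\<lambda>t. x _ * t"] cong: if_cong)
  have "y \<in> l2"
    by (rule l2_finite_support[OF F]) (simp add: y_eq)
  have Ay: "A y = (\<lambda>j. \<Sum>i\<in>F. x i * A (ket i) j)"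
    unfolding y_def by (rule bounded_op_sum_kets[OF A F])
  have "cinner y (A y) = (\<Sum>j\<in>F. cnj (y j) * A y j)"
    by (rule cinner_finite_support[OF F]) (simp add: y_eq)
  also have "\<dots> = (\<Sum>j\<in>F. \<Sum>i\<in>F. cnj (x j) * A (ket i) j * x i)"
    by (rule sum.cong) (simp_all add: y_eq Ay sum_distrib_left mult_ac)
  also have "\<dots> = (\<Sum>(j, i)\<in>F \<times> F. cnj (x j) * A (ket i) j * x i)"
    by (rule sum.cartesian_product)
  finally have form: "cinner y (A y) = (\<Sum>(j, i)\<in>F \<times> F. cnj (x j) * A (ket i) j * x i)" .
  have "cinner y (A y) \<in> \<real>\<^sub>\<ge>\<^sub>0"
    using psd \<open>y \<in> l2\<close> unfolding psd_op_def complex_nonneg_Reals_iff by blast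
  then show "(\<Sum>(j, i)\<in>F \<times> F. cnj (x j) * A (ket i) j * x i) \<in> \<real>\<^sub>\<ge>\<^sub>0"
    unfolding form .
qed

lemma psd_kernel_density_op: "density_op A \<Longrightarrow> psd_kernel (\<lambda>i j. A (ket i) j)"
  unfolding density_op_def by (blast intro: psd_kernel_of_psd_op)

lemma density_op_diag_has_sum:
  assumes A: "density_op A"
  shows "((\<lambda>i. Re (A (ket i) i)) has_sum 1) UNIV"
proof -
  let ?d = "\<lambda>i. Re (A (ket i) i)"
  have d: "(?d has_sum infsum ?d UNIV) UNIV"
    using A by (simp add: density_op_def trace_class_pos_def)
  then have "((\<lambda>i. A (ket i) i) has_sum of_real (infsum ?d UNIV)) UNIV"
    using psd_kernel_diag_has_sum_iff[OF psd_kernel_density_op[OF A]] by blast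
  then have "of_real (infsum ?d UNIV) = (1 :: complex)"
    using A infsumI by (fastforce simp: density_op_def trace_op_def)
  then show ?thesis
    using d by simp
qed

lemma density_op_diag_nonneg: "density_op A \<Longrightarrow> 0 \<le> Re (A (ket i) i)"
  using psd_kernel_diag[OF psd_kernel_density_op, of A i] by (simp add: complex_nonneg_Reals_iff)

lemma hs_kernel_density_op: "density_op A \<Longrightarrow> hs_kernel (\<lambda>i j. A (ket i) j)"
  using hs_kernel_if_psd_kernel psd_kernel_density_op density_op_diag_has_sum by blast

lemma hs_norm_nonneg: "0 \<le> hs_norm A"
  unfolding hs_norm_def by (simp add: infsum_nonneg)

lemma hs_norm_squared:
  assumes "hs_kernel (\<lambda>i j. A (ket i) j)"
  shows "(hs_norm A)\<^sup>2 = (\<Sum>\<^sub>\<infinity>(i, j). (cmod (A (ket i) j))\<^sup>2)"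
proof -
  have "(hs_norm A)\<^sup>2 = (\<Sum>\<^sub>\<infinity>i. \<Sum>\<^sub>\<infinity>j. (cmod (A (ket i) j))\<^sup>2)"
    unfolding hs_norm_def l2norm_squared by (simp add: infsum_nonneg)
  also have "\<dots> = (\<Sum>\<^sub>\<infinity>(i, j)\<in>UNIV \<times> UNIV. (cmod (A (ket i) j))\<^sup>2)"
    by (rule infsum_Sigma'_banach) (use assms in \<open>simp add: hs_kernel_def\<close>)
  finally show ?thesis
    by simp
qed

lemma cmod_le_hs_norm:
  assumes hs: "hs_kernel (\<lambda>i j. A (ket i) j)"
  shows "cmod (A (ket i) j) \<le> hs_norm A"
proof (rule power2_le_imp_le)
  have "(cmod (A (ket i) j))\<^sup>2 \<le> (\<Sum>\<^sub>\<infinity>(i, j). (cmod (A (ket i) j))\<^sup>2)"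
    using finite_sum_le_infsum[OF hs[unfolded hs_kernel_def], of "{(i, j)}"] by (simp add: case_prod_beta)
  then show "(cmod (A (ket i) j))\<^sup>2 \<le> (hs_norm A)\<^sup>2"
    by (simp add: hs_norm_squared[OF hs])
qed (simp add: hs_norm_def infsum_nonneg)

section \<open>Sublevel sets of the Hamiltonian\<close>

lemma inj_ket: "inj ket"
proof (rule injI)
  fix i j assume "ket i = ket j"
  then have "ket i i = ket j i"
    by simp
  then show "i = j"
    by (simp add: ket_def split: if_splits)
qed

lemma cindependent_kets: "cindependent (ket ` L)"
  unfolding cindependent_def
proof (intro allI impI ballI)
  fix F c v
  assume F: "finite F \<and> F \<subseteq> ket ` L \<and> (\<lambda>j. \<Sum>v\<in>F. c v * v j) = (\<lambda>j. 0)" and "v \<in> F"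
  then obtain k where v: "v = ket k"
    by auto
  have "w k = 0" if "w \<in> F - {v}" for w
    using that F v by (auto simp: ket_def)
  then have "(\<Sum>w\<in>F - {v}. c w * w k) = 0"
    by (intro sum.neutral) simp
  then have "(\<Sum>w\<in>F. c w * w k) = c v * v k"
    using F \<open>v \<in> F\<close> by (simp add: sum.remove)
  moreover have "(\<Sum>w\<in>F. c w * w k) = 0"
    using F by metis
  ultimately show "c v = 0"
    using v by (simp add: ket_def)
qed

lemma hop_bounded_on_sublevel:
  assumes x: "x \<in> l2" and bound: "\<And>i. x i \<noteq> 0 \<Longrightarrow> \<bar>Ev i\<bar> \<le> C"
  shows "(\<lambda>i. (Ev i * cmod (x i))\<^sup>2) summable_on UNIV"
    and "l2norm (hop Ev x) \<le> \<bar>C\<bar> * l2norm x"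
proof -
  have pointwise: "(Ev i * cmod (x i))\<^sup>2 \<le> C\<^sup>2 * (cmod (x i))\<^sup>2" for i
  proof (cases "x i = 0")
    case False
    then have "\<bar>Ev i\<bar>\<^sup>2 \<le> \<bar>C\<bar>\<^sup>2"
      using bound[OF False] by (intro power_mono) auto
    then show ?thesis
      by (simp add: power_mult_distrib mult_right_mono)
  qed simp
  have x2: "(\<lambda>i. C\<^sup>2 * (cmod (x i))\<^sup>2) summable_on UNIV"
    using x by (simp add: l2_def summable_on_cmult_right)
  show summable: "(\<lambda>i. (Ev i * cmod (x i))\<^sup>2) summable_on UNIV"
    by (rule summable_on_comparison_test[OF x2]) (use pointwise in auto)
  have "(\<Sum>\<^sub>\<infinity>i. (cmod (hop Ev x i))\<^sup>2) = (\<Sum>\<^sub>\<infinity>i. (Ev i * cmod (x i))\<^sup>2)"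
    by (simp add: hop_def norm_mult power_mult_distrib)
  also have "\<dots> \<le> (\<Sum>\<^sub>\<infinity>i. C\<^sup>2 * (cmod (x i))\<^sup>2)"
    by (rule infsum_mono[OF summable x2 pointwise])
  also have "\<dots> = C\<^sup>2 * (\<Sum>\<^sub>\<infinity>i. (cmod (x i))\<^sup>2)"
    by (rule infsum_cmult_right')
  finally show "l2norm (hop Ev x) \<le> \<bar>C\<bar> * l2norm x"
    unfolding l2norm_def by (metis real_sqrt_abs real_sqrt_le_mono real_sqrt_mult)
qed

lemma finite_sublevel_set:
  assumes unb: "no_bounded_inf_subspace Ev" and pos: "\<And>i. 0 \<le> Ev i"
  shows "finite {i. Ev i \<le> C}"
proof (rule ccontr)
  txt \<open>Otherwise the vectors supported on the sublevel set form an infinite-dimensional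
    subspace on which \<open>H\<close> is bounded by \<open>|C|\<close>.\<close>
  define L where "L = {i. Ev i \<le> C}"
  define V where "V = {x \<in> l2. \<forall>k. k \<notin> L \<longrightarrow> x k = 0}"
  have bound: "\<bar>Ev i\<bar> \<le> C" if "x \<in> V" "x i \<noteq> 0" for x i
    using that pos[of i] by (auto simp: V_def L_def)
  assume "infinite {i. Ev i \<le> C}"
  then have "infinite (ket ` L)"
    using finite_imageD[of ket L] inj_ket by (auto simp: L_def inj_on_def inj_def)
  moreover have "ket ` L \<subseteq> V"
    using ket_in_l2 unfolding V_def L_def ket_def by auto
  ultimately have "infinite_dim V"
    unfolding infinite_dim_def using cindependent_kets by blast
  moreover have "csubspace_l2 V"
    unfolding csubspace_l2_def V_def by (auto intro: l2_finite_support[of "{}"] l2_add l2_scale)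
  moreover have "V \<subseteq> hdom Ev"
  proof
    fix x assume "x \<in> V"
    then show "x \<in> hdom Ev"
      using hop_bounded_on_sublevel(1)[of x Ev C] bound[of x] by (auto simp: hdom_def V_def)
  qed
  moreover have "\<forall>x\<in>V. l2norm (hop Ev x) \<le> \<bar>C\<bar> * l2norm x"
  proof
    fix x assume "x \<in> V"
    then show "l2norm (hop Ev x) \<le> \<bar>C\<bar> * l2norm x"
      using hop_bounded_on_sublevel(2)[of x Ev C] bound[of x] by (auto simp: V_def)
  qed
  ultimately show False
    using unb unfolding no_bounded_inf_subspace_def by blast
qed

lemma sublevel_set_infsum_ge:
  fixes p Ev :: "'a \<Rightarrow> real"
  assumes p: "(p has_sum 1) UNIV" and p_nonneg: "\<And>i. 0 \<le> p i" and pos: "\<And>i. 0 \<le> Ev i"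
    and energy: "(\<lambda>i. p i * Ev i) summable_on UNIV" "(\<Sum>\<^sub>\<infinity>i. p i * Ev i) \<le> E"
    and C: "0 < C"
  shows "1 - E / C \<le> (\<Sum>\<^sub>\<infinity>i\<in>{i. Ev i \<le> C}. p i)"
proof -
  define L where "L = {i. Ev i \<le> C}"
  have summable: "p summable_on B" for B
    using summable_on_subset_banach[OF has_sum_imp_summable[OF p]] by blast
  have "1 = (\<Sum>\<^sub>\<infinity>i\<in>L \<union> - L. p i)"
    using infsumI[OF p] by simp
  also have "\<dots> = (\<Sum>\<^sub>\<infinity>i\<in>L. p i) + (\<Sum>\<^sub>\<infinity>i\<in>- L. p i)"
    by (rule infsum_Un_disjoint[OF summable summable]) auto
  also have "(\<Sum>\<^sub>\<infinity>i\<in>- L. p i) \<le> (\<Sum>\<^sub>\<infinity>i\<in>- L. p i * Ev i * inverse C)"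
  proof (rule infsum_mono)
    show "(\<lambda>i. p i * Ev i * inverse C) summable_on - L"
      by (intro summable_on_cmult_left summable_on_subset_banach[OF energy(1)]) auto
    fix i assume "i \<in> - L"
    then have "C \<le> Ev i"
      by (simp add: L_def)
    then show "p i \<le> p i * Ev i * inverse C"
      using C p_nonneg[of i] by (simp add: field_simps mult_right_mono)
  qed (rule summable)
  also have "\<dots> = (\<Sum>\<^sub>\<infinity>i\<in>- L. p i * Ev i) * inverse C"
    by (rule infsum_cmult_left')
  also have "\<dots> \<le> E * inverse C"
  proof (rule mult_right_mono)
    have "(\<Sum>\<^sub>\<infinity>i\<in>- L. p i * Ev i) \<le> (\<Sum>\<^sub>\<infinity>i. p i * Ev i)"
      using energy(1) p_nonneg pos
      by (intro infsum_mono_neutral summable_on_subset_banach[OF energy(1)]) auto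
    then show "(\<Sum>\<^sub>\<infinity>i\<in>- L. p i * Ev i) \<le> E"
      using energy(2) by linarith
  qed (use C in simp)
  finally show ?thesis
    unfolding L_def by (simp add: divide_inverse)
qed

section \<open>Limits of Hilbert--Schmidt Cauchy sequences\<close>

lemma hs_cauchy_entries_convergent:
  assumes hs: "\<And>n. hs_kernel (\<lambda>i j. \<rho> n (ket i) j)"
    and cauchy: "\<forall>\<epsilon>>0. \<exists>N. \<forall>m\<ge>N. \<forall>n\<ge>N. hs_norm (\<lambda>x. \<rho> m x - \<rho> n x) < \<epsilon>"
  shows "convergent (\<lambda>n. \<rho> n (ket i) j)"
proof (rule Cauchy_convergent, rule metric_CauchyI)
  fix \<epsilon> :: real assume "0 < \<epsilon>"
  then obtain N where N: "\<forall>m\<ge>N. \<forall>n\<ge>N. hs_norm (\<lambda>x. \<rho> m x - \<rho> n x) < \<epsilon>"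
    using cauchy by blast
  have "dist (\<rho> m (ket i) j) (\<rho> n (ket i) j) < \<epsilon>" if "N \<le> m" "N \<le> n" for m n
  proof -
    have "dist (\<rho> m (ket i) j) (\<rho> n (ket i) j) \<le> hs_norm (\<lambda>x. \<rho> m x - \<rho> n x)"
      using cmod_le_hs_norm[of "\<lambda>x. \<rho> m x - \<rho> n x" i j] hs_kernel_diff[OF hs hs]
      by (simp add: dist_norm)
    then show ?thesis
      using N that by fastforce
  qed
  then show "\<exists>M. \<forall>m\<ge>M. \<forall>n\<ge>M. dist (\<rho> m (ket i) j) (\<rho> n (ket i) j) < \<epsilon>"
    by blast
qed

lemma hs_norm_diff_mat_op_le:
  assumes hs: "\<And>m. hs_kernel (\<lambda>i j. \<rho> m (ket i) j)" and hs_A: "hs_kernel (\<lambda>i j. A (ket i) j)"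
    and lim: "\<And>i j. (\<lambda>m. \<rho> m (ket i) j) \<longlonglongrightarrow> s i j"
    and bound: "\<forall>\<^sub>F m in sequentially. hs_norm (\<lambda>x. \<rho> m x - A x) \<le> r"
  shows "hs_norm (\<lambda>x. A x - mat_op s x) \<le> r"
proof -
  let ?d = "\<lambda>m (i, j). (cmod (\<rho> m (ket i) j - A (ket i) j))\<^sup>2"
  let ?e = "\<lambda>(i, j). (cmod (A (ket i) j - s i j))\<^sup>2"
  obtain N where "\<And>m. N \<le> m \<Longrightarrow> hs_norm (\<lambda>x. \<rho> m x - A x) \<le> r"
    using bound by (auto simp: eventually_sequentially)
  then have "0 \<le> r"
    using hs_norm_nonneg[of "\<lambda>x. \<rho> N x - A x"] by fastforce
  have d_lim: "(\<lambda>m. ?d m p) \<longlonglongrightarrow> ?e p" for p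
  proof (cases p)
    case (Pair i j)
    have "(\<lambda>m. (cmod (\<rho> m (ket i) j - A (ket i) j))\<^sup>2) \<longlonglongrightarrow> (cmod (s i j - A (ket i) j))\<^sup>2"
      by (intro tendsto_intros lim)
    then show ?thesis
      by (simp add: Pair norm_minus_commute)
  qed
  have "\<forall>\<^sub>F m in sequentially. (\<forall>p\<in>UNIV. 0 \<le> ?d m p) \<and> ?d m summable_on UNIV \<and> infsum (?d m) UNIV \<le> r\<^sup>2"
    using bound
  proof eventually_elim
    case (elim m)
    have hs_m: "hs_kernel (\<lambda>i j. (\<lambda>x. \<rho> m x - A x) (ket i) j)"
      using hs_kernel_diff[OF hs hs_A] by simp
    have "(hs_norm (\<lambda>x. \<rho> m x - A x))\<^sup>2 \<le> r\<^sup>2"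
      using elim by (intro power_mono hs_norm_nonneg)
    then show ?case
      using hs_m hs_norm_squared[OF hs_m] by (auto simp: hs_kernel_def)
  qed
  then have e: "?e summable_on UNIV" "infsum ?e UNIV \<le> r\<^sup>2"
    using infsum_le_of_tendsto[of sequentially UNIV ?d ?e] d_lim by auto
  have hs_lim: "hs_kernel (\<lambda>i j. (\<lambda>x. A x - mat_op s x) (ket i) j)"
    using e(1) by (simp add: hs_kernel_def)
  have "(hs_norm (\<lambda>x. A x - mat_op s x))\<^sup>2 = infsum ?e UNIV"
    unfolding hs_norm_squared[OF hs_lim] by simp
  with e(2) have "(hs_norm (\<lambda>x. A x - mat_op s x))\<^sup>2 \<le> r\<^sup>2"
    by simp
  then show ?thesis
    using \<open>0 \<le> r\<close> by (rule power2_le_imp_le)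
qed

lemma hs_norm_tendsto_mat_op:
  assumes hs: "\<And>n. hs_kernel (\<lambda>i j. \<rho> n (ket i) j)"
    and cauchy: "\<forall>\<epsilon>>0. \<exists>N. \<forall>m\<ge>N. \<forall>n\<ge>N. hs_norm (\<lambda>x. \<rho> m x - \<rho> n x) < \<epsilon>"
    and lim: "\<And>i j. (\<lambda>n. \<rho> n (ket i) j) \<longlonglongrightarrow> s i j"
  shows "(\<lambda>n. hs_norm (\<lambda>x. \<rho> n x - mat_op s x)) \<longlonglongrightarrow> 0"
proof (rule LIMSEQ_I)
  fix r :: real assume "0 < r"
  then obtain N where N: "\<forall>m\<ge>N. \<forall>n\<ge>N. hs_norm (\<lambda>x. \<rho> m x - \<rho> n x) < r / 2"
    using cauchy half_gt_zero by blast
  have "norm (hs_norm (\<lambda>x. \<rho> n x - mat_op s x) - 0) < r" if "N \<le> n" for n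
  proof -
    have "\<forall>\<^sub>F m in sequentially. hs_norm (\<lambda>x. \<rho> m x - \<rho> n x) \<le> r / 2"
      by (intro eventually_sequentiallyI[of N]) (use N that in \<open>auto intro: less_imp_le\<close>)
    then have "hs_norm (\<lambda>x. \<rho> n x - mat_op s x) \<le> r / 2"
      by (rule hs_norm_diff_mat_op_le[OF hs hs lim])
    then show ?thesis
      using hs_norm_nonneg[of "\<lambda>x. \<rho> n x - mat_op s x"] \<open>0 < r\<close> by simp
  qed
  then show "\<exists>N. \<forall>n\<ge>N. norm (hs_norm (\<lambda>x. \<rho> n x - mat_op s x) - 0) < r"
    by blast
qed

lemma diag_limit_has_sum_1:
  assumes pos: "\<And>i. 0 \<le> Ev i" and levels: "\<And>C. finite {i. Ev i \<le> C}"
    and dens: "\<And>n. density_op (\<rho> n)" and energy: "\<And>n. energy_bounded Ev E (\<rho> n)"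
    and lim: "\<And>i. (\<lambda>n. Re (\<rho> n (ket i) i)) \<longlonglongrightarrow> D i"
  shows "(D has_sum 1) UNIV"
proof -
  have diag: "((\<lambda>i. Re (\<rho> n (ket i) i)) has_sum 1) UNIV" for n
    by (rule density_op_diag_has_sum[OF dens])
  have D_nonneg: "0 \<le> D i" for i
    by (rule tendsto_lowerbound[OF lim]) (simp_all add: density_op_diag_nonneg[OF dens])
  have "\<forall>\<^sub>F n in sequentially. (\<forall>i\<in>UNIV. 0 \<le> Re (\<rho> n (ket i) i))
      \<and> (\<lambda>i. Re (\<rho> n (ket i) i)) summable_on UNIV \<and> (\<Sum>\<^sub>\<infinity>i. Re (\<rho> n (ket i) i)) \<le> 1"
    using has_sum_imp_summable[OF diag] infsumI[OF diag] density_op_diag_nonneg[OF dens] by simp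
  then have D: "D summable_on UNIV" "infsum D UNIV \<le> 1"
    using infsum_le_of_tendsto[of sequentially UNIV "\<lambda>n i. Re (\<rho> n (ket i) i)" D 1] lim by auto
  have "1 - E / C \<le> infsum D UNIV" if "0 < C" for C
  proof -
    have "1 - E / C \<le> (\<Sum>i\<in>{i. Ev i \<le> C}. D i)"
    proof (rule tendsto_lowerbound)
      show "(\<lambda>n. \<Sum>i\<in>{i. Ev i \<le> C}. Re (\<rho> n (ket i) i)) \<longlonglongrightarrow> (\<Sum>i\<in>{i. Ev i \<le> C}. D i)"
        by (intro tendsto_sum lim)
      have "1 - E / C \<le> (\<Sum>i\<in>{i. Ev i \<le> C}. Re (\<rho> n (ket i) i))" for n
        using sublevel_set_infsum_ge[of "\<lambda>i. Re (\<rho> n (ket i) i)" Ev E C] diag density_op_diag_nonneg[OF dens]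
          pos energy[of n] levels that
        by (simp add: energy_bounded_def)
      then show "\<forall>\<^sub>F n in sequentially. 1 - E / C \<le> (\<Sum>i\<in>{i. Ev i \<le> C}. Re (\<rho> n (ket i) i))"
        by simp
    qed simp
    also have "\<dots> \<le> infsum D UNIV"
      by (rule finite_sum_le_infsum[OF D(1) levels]) (simp_all add: D_nonneg)
    finally show ?thesis .
  qed
  then have "1 \<le> infsum D UNIV"
  proof (intro tendsto_upperbound[of "\<lambda>C. 1 - E / C" 1 at_top])
    show "((\<lambda>C. 1 - E / C) \<longlongrightarrow> 1) at_top"
      using tendsto_diff[OF tendsto_const[of 1]
          tendsto_divide_0[OF tendsto_const[of E] filterlim_at_top_imp_at_infinity[OF filterlim_ident]]]
      by simp
  qed (auto intro: eventually_mono[OF eventually_gt_at_top[of 0]])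
  then show ?thesis
    using D has_sum_infsum[OF D(1)] by simp
qed

lemma energy_bounded_mat_op_limit:
  assumes pos: "\<And>i. 0 \<le> Ev i"
    and dens: "\<And>n. density_op (\<rho> n)" and energy: "\<And>n. energy_bounded Ev E (\<rho> n)"
    and lim: "\<And>i. (\<lambda>n. Re (\<rho> n (ket i) i)) \<longlonglongrightarrow> Re (s i i)"
  shows "energy_bounded Ev E (mat_op s)"
proof -
  have "\<forall>\<^sub>F n in sequentially. (\<forall>i\<in>UNIV. 0 \<le> Re (\<rho> n (ket i) i) * Ev i)
      \<and> (\<lambda>i. Re (\<rho> n (ket i) i) * Ev i) summable_on UNIV \<and> (\<Sum>\<^sub>\<infinity>i. Re (\<rho> n (ket i) i) * Ev i) \<le> E"
    using energy density_op_diag_nonneg[OF dens] pos by (simp add: energy_bounded_def)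
  moreover have "(\<lambda>n. Re (\<rho> n (ket i) i) * Ev i) \<longlonglongrightarrow> Re (s i i) * Ev i" for i
    by (intro tendsto_mult_right lim)
  ultimately show ?thesis
    using infsum_le_of_tendsto[of sequentially UNIV "\<lambda>n i. Re (\<rho> n (ket i) i) * Ev i" "\<lambda>i. Re (s i i) * Ev i" E]
    by (simp add: energy_bounded_def)
qed

theorem mainTheorem8:
  fixes Ev :: "'i::countable \<Rightarrow> real" and E :: real
    and \<rho> :: "nat \<Rightarrow> ('i \<Rightarrow> complex) \<Rightarrow> ('i \<Rightarrow> complex)"
  assumes pos: "\<forall>i. Ev i \<ge> 0"
    and unb: "no_bounded_inf_subspace Ev"
    and Epos: "E > 0"
    and inP: "\<forall>n. \<rho> n \<in> Pset Ev E"
    and cauchy: "\<forall>\<epsilon>>0. \<exists>N. \<forall>m\<ge>N. \<forall>n\<ge>N. hs_norm (\<lambda>x. \<rho> m x - \<rho> n x) < \<epsilon>"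
  shows "\<exists>\<sigma>\<in>Pset Ev E. (\<lambda>n. hs_norm (\<lambda>x. \<rho> n x - \<sigma> x)) \<longlonglongrightarrow> 0"
proof -
  have nonneg: "\<And>i. 0 \<le> Ev i"
    using pos by simp
  have dens: "\<And>n. density_op (\<rho> n)" and energy: "\<And>n. energy_bounded Ev E (\<rho> n)"
    using inP by (simp_all add: Pset_def)
  have hs: "\<And>n. hs_kernel (\<lambda>i j. \<rho> n (ket i) j)"
    by (rule hs_kernel_density_op[OF dens])
  define s where "s i j = lim (\<lambda>n. \<rho> n (ket i) j)" for i j
  have lim: "\<And>i j. (\<lambda>n. \<rho> n (ket i) j) \<longlonglongrightarrow> s i j"
    unfolding s_def using hs_cauchy_entries_convergent[OF hs cauchy] by (simp add: convergent_LIMSEQ_iff)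
  have psd: "psd_kernel s"
    by (rule psd_kernel_tendsto[OF lim]) (simp_all add: psd_kernel_density_op[OF dens])
  have diag_lim: "\<And>i. (\<lambda>n. Re (\<rho> n (ket i) i)) \<longlonglongrightarrow> Re (s i i)"
    by (intro tendsto_Re lim)
  have trace: "((\<lambda>i. Re (s i i)) has_sum 1) UNIV"
    by (rule diag_limit_has_sum_1[OF nonneg finite_sublevel_set[OF unb nonneg] dens energy diag_lim])
  have "energy_bounded Ev E (mat_op s)"
    using nonneg dens energy diag_lim by (rule energy_bounded_mat_op_limit)
  then have "mat_op s \<in> Pset Ev E"
    unfolding Pset_def using density_op_mat_op[OF psd trace] by simp
  moreover have "(\<lambda>n. hs_norm (\<lambda>x. \<rho> n x - mat_op s x)) \<longlonglongrightarrow> 0"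
    by (rule hs_norm_tendsto_mat_op[OF hs cauchy lim])
  ultimately show ?thesis
    by blast
qed

end
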